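(* Let $X$ be a Baire space and $(Z,d)$ a metric space. Let $f_n:X\to Z$ ($n\in\mathbb N$) be quasicontinuous mappings and $f:X\to Z$ a mapping. Suppose that for each $x\in X$, $f(x)$ is a cluster point of the sequence $(f_n(x))_{n\in\mathbb N}$, and that for each $x$ in a given dense Baire subspace $A$ of $X$, $(f_n(x))_{n\in\mathbb N}$ converges to $f(x)$. Then for each $x\in A$ the following are equivalent: (1) the sequence $(f_n)_{n\in\mathbb N}$ is equi-quasicontinuous at $x$; (2) $f$ is quasicontinuous at $x$.
   Context: A mapping $g:X\to Z$ is quasicontinuous at $a$ if for each neighborhood $U$ of $a$ and each neighborhood $W$ of $g(a)$ there is an open $O$ with $\emptyset\ne O\subset U$ and $g(O)\subset W$; quasicontinuous means at every point. A sequence $(f_n)$ of mappings $X\to Z$ is equi-quasicontinuous at $x\in X$ if for each neighborhood $U$ of $x$ and each $\varepsilon>0$ there are an open set $O\subset X$ with $\emptyset\ne O\subset U$ and $n_0\in\mathbb N$ such that $d(f_n(x),f_n(y))<\varepsilon$ for every $n\ge n_0$ and every $y\in O$. *)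

theory Defs
  imports "HOL-Analysis.Analysis"
begin

definition baire_space :: "'a topology \<Rightarrow> bool" where
  "baire_space T \<longleftrightarrow>
     (\<forall>U :: nat \<Rightarrow> 'a set.
        (\<forall>n. openin T (U n) \<and> T closure_of (U n) = topspace T)
        \<longrightarrow> T closure_of (\<Inter>n. U n) = topspace T)"

definition quasicontinuous_at :: "('a::topological_space \<Rightarrow> 'b::topological_space) \<Rightarrow> 'a \<Rightarrow> bool" where
  "quasicontinuous_at g a \<longleftrightarrow>
     (\<forall>U W. open U \<and> a \<in> U \<and> open W \<and> g a \<in> W \<longrightarrow>
        (\<exists>V. open V \<and> V \<noteq> {} \<and> V \<subseteq> U \<and> g ` V \<subseteq> W))"

definition quasicontinuous :: "('a::topological_space \<Rightarrow> 'b::topological_space) \<Rightarrow> bool" where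
  "quasicontinuous g \<longleftrightarrow> (\<forall>a. quasicontinuous_at g a)"

definition equi_quasicontinuous_at :: "(nat \<Rightarrow> 'a::topological_space \<Rightarrow> 'b::metric_space) \<Rightarrow> 'a \<Rightarrow> bool" where
  "equi_quasicontinuous_at fs x \<longleftrightarrow>
     (\<forall>U e. open U \<and> x \<in> U \<and> e > 0 \<longrightarrow>
        (\<exists>V n0. open V \<and> V \<noteq> {} \<and> V \<subseteq> U \<and>
           (\<forall>n\<ge>n0. \<forall>y\<in>V. dist (fs n x) (fs n y) < e)))"

definition cluster_point_seq :: "'b::topological_space \<Rightarrow> (nat \<Rightarrow> 'b) \<Rightarrow> bool" where
  "cluster_point_seq z s \<longleftrightarrow>
     (\<forall>W. open W \<and> z \<in> W \<longrightarrow> (\<exists>\<^sub>F n in sequentially. s n \<in> W))"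

end

theory Submission
  imports Defs
begin

text \<open>
  (1) \<open>\<Rightarrow>\<close> (2): given \<open>y\<close> in the open set \<open>V\<close> supplied by equi-quasicontinuity,
  pick a large \<open>n\<close> with \<open>fs n y\<close> close to the cluster point \<open>f y\<close> and \<open>fs n x\<close>
  close to the limit \<open>f x\<close>; the triangle inequality gives \<open>f y\<close> close to \<open>f x\<close>.

  (2) \<open>\<Rightarrow>\<close> (1): quasicontinuity of \<open>f\<close> gives an open \<open>V\<close> on which \<open>f\<close> stays near
  \<open>f x\<close>.  By convergence on \<open>A\<close>, the points of \<open>A \<inter> V\<close> are covered by the sets
  \<open>G k\<close> of points where \<open>fs n\<close> stays near \<open>f x\<close> from index \<open>k\<close> on.  A Baire category
  argument in the dense Baire subspace \<open>A\<close> yields a nonempty open \<open>Q \<subseteq> V\<close> inside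
  some \<open>closure (G k)\<close>, and quasicontinuity of each \<open>fs n\<close> transfers the bound
  from the dense part \<open>G k\<close> to all of \<open>Q\<close>.  This \<open>Q\<close> witnesses equi-quasicontinuity.
\<close>

lemma quasicontinuous_atE:
  assumes "quasicontinuous_at g a" "open U" "a \<in> U" "open W" "g a \<in> W"
  obtains V where "open V" "V \<noteq> {}" "V \<subseteq> U" "g ` V \<subseteq> W"
  using assms unfolding quasicontinuous_at_def by blast

lemma open_subset_closed_by_dense:
  assumes "open P" "closed C" "closure A = UNIV" "P \<inter> A \<subseteq> C"
  shows "P \<subseteq> C"
proof -
  have "(P - C) \<inter> A = {}" using assms(4) by auto
  then have "(P - C) \<inter> closure A = {}"
    using open_Int_closure_eq_empty[of "P - C" A] assms(1,2) by auto
  then show ?thesis using assms(3) by auto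
qed

lemma dense_baire_subspace_Inter_dense:
  fixes D :: "nat \<Rightarrow> 'a::topological_space set"
  assumes A_dense: "closure A = UNIV"
    and A_baire: "baire_space (subtopology euclidean A)"
    and D_open: "\<And>k. openin (subtopology euclidean A) (D k)"
    and D_dense: "\<And>k. subtopology euclidean A closure_of D k = A"
  shows "closure (\<Inter>k. D k) = UNIV"
proof -
  have "subtopology euclidean A closure_of (\<Inter>k. D k) = A"
    using A_baire D_open D_dense unfolding baire_space_def by simp
  then have "A \<subseteq> closure (\<Inter>k. D k)"
    using closure_of_subtopology_subset[of euclidean A "\<Inter>k. D k"] by auto
  then have "closure A \<subseteq> closure (\<Inter>k. D k)"
    by (simp add: closure_minimal)
  then show ?thesis using A_dense by auto
qed

lemma dense_baire_subspace_closed_cover: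
  fixes K :: "nat \<Rightarrow> 'a::topological_space set"
  assumes A_dense: "closure A = UNIV"
    and A_baire: "baire_space (subtopology euclidean A)"
    and V: "open V" "V \<noteq> {}"
    and K_closed: "\<And>k. closed (K k)"
    and cover: "A \<inter> V \<subseteq> (\<Union>k. K k)"
  obtains k Q where "open Q" "Q \<noteq> {}" "Q \<subseteq> V" "Q \<subseteq> K k"
proof -
  define L where "L k = K k \<inter> closure V" for k
  define D where "D k = A - L k" for k
  have L_closed: "closed (L k)" for k
    unfolding L_def using K_closed by auto
  have D_open: "openin (subtopology euclidean A) (D k)" for k
  proof -
    have "D k = (- L k) \<inter> A" unfolding D_def by auto
    then show ?thesis
      using openin_subtopology_Int[of euclidean "- L k" A] L_closed by auto
  qed
  have "\<exists>k. subtopology euclidean A closure_of D k \<noteq> A"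
  proof (rule ccontr)
    assume "\<not> ?thesis"
    then have "\<And>k. subtopology euclidean A closure_of D k = A" by blast
    then have "closure (\<Inter>k. D k) = UNIV"
      by (rule dense_baire_subspace_Inter_dense[OF A_dense A_baire D_open])
    then have "V \<inter> (\<Inter>k. D k) \<noteq> {}"
      using open_Int_closure_eq_empty[OF V(1), of "\<Inter>k. D k"] V(2) by simp
    then obtain y where y: "y \<in> V" "\<And>k. y \<in> D k" by blast
    then have "y \<in> A \<inter> V" unfolding D_def by blast
    then obtain k where "y \<in> K k" using cover by blast
    then have "y \<in> L k" unfolding L_def using y(1) closure_subset by blast
    then show False using y(2)[of k] unfolding D_def by blast
  qed
  then obtain k where k: "subtopology euclidean A closure_of D k \<noteq> A" by blast
  have "D k \<subseteq> A" unfolding D_def by auto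
  moreover have "subtopology euclidean A closure_of D k \<subseteq> A"
    by (metis closure_of_subset_topspace topspace_euclidean_subtopology)
  ultimately obtain a where a: "a \<in> A" "a \<notin> closure (D k)"
    using k closure_of_subtopology_open[of euclidean A "D k"] by auto
  define P where "P = - closure (D k)"
  have P_open: "open P" unfolding P_def by auto
  have "P \<inter> A \<subseteq> L k"
    using closure_subset[of "D k"] unfolding P_def D_def by blast
  then have P_sub: "P \<subseteq> L k"
    using open_subset_closed_by_dense[OF P_open L_closed A_dense] by blast
  have "a \<in> P" using a unfolding P_def by auto
  then have "P \<inter> closure V \<noteq> {}" using P_sub unfolding L_def by auto
  then have "P \<inter> V \<noteq> {}" using open_Int_closure_eq_empty[OF P_open] by auto
  moreover have "P \<inter> V \<subseteq> K k" using P_sub unfolding L_def by auto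
  moreover have "open (P \<inter> V)" using P_open V(1) by (rule open_Int)
  ultimately show thesis using that[of "P \<inter> V" k] by blast
qed

lemma quasicontinuous_image_closed:
  assumes qc: "\<And>y. y \<in> Q \<Longrightarrow> quasicontinuous_at g y"
    and Q: "open Q" "Q \<subseteq> closure (g -` C)"
    and C: "closed C"
  shows "g ` Q \<subseteq> C"
proof
  fix z assume "z \<in> g ` Q"
  then obtain y where y: "y \<in> Q" "z = g y" by auto
  show "z \<in> C"
  proof (rule ccontr)
    assume "z \<notin> C"
    then obtain N where N: "open N" "N \<noteq> {}" "N \<subseteq> Q" "g ` N \<subseteq> - C"
      using quasicontinuous_atE[OF qc[OF y(1)] Q(1) y(1), of "- C"] C y(2) by auto
    then have "N \<inter> g -` C \<noteq> {}"
      using Q(2) open_Int_closure_eq_empty[OF N(1), of "g -` C"] by auto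
    then show False using N(4) by auto
  qed
qed

lemma equi_quasicontinuous_imp_quasicontinuous:
  fixes fs :: "nat \<Rightarrow> 'a::topological_space \<Rightarrow> 'b::metric_space"
  assumes cluster: "\<And>y. cluster_point_seq (f y) (\<lambda>n. fs n y)"
    and conv_x: "(\<lambda>n. fs n x) \<longlonglongrightarrow> f x"
    and equi: "equi_quasicontinuous_at fs x"
  shows "quasicontinuous_at f x"
  unfolding quasicontinuous_at_def
proof (intro allI impI)
  fix U W assume UW: "open U \<and> x \<in> U \<and> open W \<and> f x \<in> W"
  then obtain e where e: "e > 0" "ball (f x) e \<subseteq> W" by (meson openE)
  obtain N where N: "\<And>n. n \<ge> N \<Longrightarrow> dist (fs n x) (f x) < e/3"
    using tendstoD[OF conv_x, of "e/3"] e(1) by (auto simp: eventually_sequentially)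
  obtain V n0 where V: "open V" "V \<noteq> {}" "V \<subseteq> U"
    and V_close: "\<And>n y. n \<ge> n0 \<Longrightarrow> y \<in> V \<Longrightarrow> dist (fs n x) (fs n y) < e/3"
  proof -
    have "e/3 > 0" using e(1) by simp
    then have "\<exists>V n0. open V \<and> V \<noteq> {} \<and> V \<subseteq> U \<and>
        (\<forall>n\<ge>n0. \<forall>y\<in>V. dist (fs n x) (fs n y) < e/3)"
      using equi[unfolded equi_quasicontinuous_at_def, rule_format, of U "e/3"] UW by blast
    then show thesis using that by blast
  qed
  have "f ` V \<subseteq> ball (f x) e"
  proof
    fix z assume "z \<in> f ` V"
    then obtain y where y: "y \<in> V" "z = f y" by auto
    have "\<exists>\<^sub>F n in sequentially. fs n y \<in> ball (f y) (e/3)"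
      using cluster[of y, unfolded cluster_point_seq_def, rule_format, of "ball (f y) (e/3)"] e(1)
      by simp
    then obtain n where n: "n \<ge> max N n0" "fs n y \<in> ball (f y) (e/3)"
      unfolding frequently_sequentially by blast
    have "dist (f x) (f y) \<le> dist (f x) (fs n x) + dist (fs n x) (f y)"
      by (rule dist_triangle)
    moreover have "dist (fs n x) (f y) \<le> dist (fs n x) (fs n y) + dist (fs n y) (f y)"
      by (rule dist_triangle)
    moreover have "dist (fs n x) (f x) < e/3" "dist (fs n x) (fs n y) < e/3"
      using N[of n] V_close[of n y] n y(1) by auto
    moreover have "dist (f x) (fs n x) = dist (fs n x) (f x)" "dist (fs n y) (f y) = dist (f y) (fs n y)"
      by (simp_all add: dist_commute)
    moreover have "dist (f y) (fs n y) < e/3" using n(2) by simp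
    ultimately have "dist (f x) (f y) < e" by linarith
    then show "z \<in> ball (f x) e" using y(2) by simp
  qed
  then show "\<exists>V. open V \<and> V \<noteq> {} \<and> V \<subseteq> U \<and> f ` V \<subseteq> W" using V e(2) by blast
qed

lemma quasicontinuous_imp_equi_quasicontinuous:
  fixes fs :: "nat \<Rightarrow> 'a::topological_space \<Rightarrow> 'b::metric_space"
  assumes qc: "\<And>n. quasicontinuous (fs n)"
    and A_dense: "closure A = UNIV"
    and A_baire: "baire_space (subtopology euclidean A)"
    and conv: "\<And>y. y \<in> A \<Longrightarrow> (\<lambda>n. fs n y) \<longlonglongrightarrow> f y"
    and xA: "x \<in> A"
    and f_qc: "quasicontinuous_at f x"
  shows "equi_quasicontinuous_at fs x"
  unfolding equi_quasicontinuous_at_def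
proof (intro allI impI)
  fix U and e :: real assume Ue: "open U \<and> x \<in> U \<and> e > 0"
  obtain V where V: "open V" "V \<noteq> {}" "V \<subseteq> U" "f ` V \<subseteq> ball (f x) (e/8)"
    using quasicontinuous_atE[OF f_qc, of U "ball (f x) (e/8)"] Ue by auto
  define G where "G k = {y. \<forall>n\<ge>k. dist (fs n y) (f x) \<le> e/4}" for k
  have cover: "A \<inter> V \<subseteq> (\<Union>k. closure (G k))"
  proof
    fix y assume y: "y \<in> A \<inter> V"
    obtain k where k: "\<And>n. n \<ge> k \<Longrightarrow> dist (fs n y) (f y) < e/8"
      using tendstoD[OF conv[of y], of "e/8"] y Ue by (auto simp: eventually_sequentially)
    have fy: "dist (f y) (f x) < e/8" using V(4) y by (auto simp: dist_commute)
    have "y \<in> G k" unfolding G_def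
    proof (intro CollectI allI impI)
      fix n assume "k \<le> n"
      have "dist (fs n y) (f x) \<le> dist (fs n y) (f y) + dist (f y) (f x)"
        by (rule dist_triangle)
      then show "dist (fs n y) (f x) \<le> e/4" using k[OF \<open>k \<le> n\<close>] fy by linarith
    qed
    then show "y \<in> (\<Union>k. closure (G k))" using closure_subset by blast
  qed
  obtain k Q where Q: "open Q" "Q \<noteq> {}" "Q \<subseteq> V" "Q \<subseteq> closure (G k)"
    by (rule dense_baire_subspace_closed_cover[OF A_dense A_baire V(1,2) _ cover]) auto
  have near_fx: "dist (fs n y) (f x) \<le> e/4" if "n \<ge> k" "y \<in> Q" for n y
  proof -
    have "G k \<subseteq> fs n -` cball (f x) (e/4)"
    proof
      fix z assume "z \<in> G k"
      then have "dist (fs n z) (f x) \<le> e/4" using that(1) unfolding G_def by blast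
      then show "z \<in> fs n -` cball (f x) (e/4)" by (simp add: dist_commute)
    qed
    then have "Q \<subseteq> closure (fs n -` cball (f x) (e/4))"
      using Q(4) closure_mono by blast
    moreover have "\<And>y. quasicontinuous_at (fs n) y"
      using qc unfolding quasicontinuous_def by blast
    ultimately have "fs n ` Q \<subseteq> cball (f x) (e/4)"
      using quasicontinuous_image_closed[OF _ Q(1) _ closed_cball] by blast
    then have "fs n y \<in> cball (f x) (e/4)" using that(2) by blast
    then show ?thesis by (simp add: dist_commute)
  qed
  obtain N where N: "\<And>n. n \<ge> N \<Longrightarrow> dist (fs n x) (f x) < e/2"
    using tendstoD[OF conv[OF xA], of "e/2"] Ue by (auto simp: eventually_sequentially)
  have "\<forall>n\<ge>max k N. \<forall>y\<in>Q. dist (fs n x) (fs n y) < e"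
  proof (intro allI impI ballI)
    fix n y assume n: "max k N \<le> n" and y: "y \<in> Q"
    have "dist (fs n x) (fs n y) \<le> dist (fs n x) (f x) + dist (fs n y) (f x)"
      by (rule dist_triangle2)
    moreover have "dist (fs n x) (f x) < e/2" using N n by simp
    moreover have "dist (fs n y) (f x) \<le> e/4" using near_fx n y by simp
    ultimately show "dist (fs n x) (fs n y) < e" using Ue by linarith
  qed
  moreover have "Q \<subseteq> U" using Q(3) V(3) by blast
  ultimately show "\<exists>V n0. open V \<and> V \<noteq> {} \<and> V \<subseteq> U \<and>
      (\<forall>n\<ge>n0. \<forall>y\<in>V. dist (fs n x) (fs n y) < e)"
    using Q(1,2) by blast
qed

theorem theorem4p5:
  fixes fs :: "nat \<Rightarrow> 'a::topological_space \<Rightarrow> 'b::metric_space"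
    and f :: "'a \<Rightarrow> 'b"
    and A :: "'a set"
  assumes X_baire: "baire_space (euclidean :: 'a topology)"
    and qc: "\<And>n. quasicontinuous (fs n)"
    and cluster: "\<And>x. cluster_point_seq (f x) (\<lambda>n. fs n x)"
    and A_dense: "closure A = UNIV"
    and A_baire: "baire_space (subtopology euclidean A)"
    and conv: "\<And>x. x \<in> A \<Longrightarrow> (\<lambda>n. fs n x) \<longlonglongrightarrow> f x"
  shows "\<forall>x\<in>A. (equi_quasicontinuous_at fs x \<longleftrightarrow> quasicontinuous_at f x)"
proof
  fix x assume xA: "x \<in> A"
  show "equi_quasicontinuous_at fs x \<longleftrightarrow> quasicontinuous_at f x"
    using equi_quasicontinuous_imp_quasicontinuous[of f fs, OF cluster conv[OF xA]]
      quasicontinuous_imp_equi_quasicontinuous[OF qc A_dense A_baire conv xA]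
    by blast
qed

end
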